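(* Fix a joint distribution of $(X,Y,Z)$, where $X$ is a feature vector, $Y\in\{0,1\}$ is the true label and $Z$ is a sensitive attribute taking values in a finite set $\mathcal{G}$ with $|\mathcal{G}|\ge 2$. Suppose that the fairness-accuracy pairs $(\epsilon_1,a_1),(\epsilon_2,a_2),\ldots,(\epsilon_k,a_k)$ are all achievable with respect to demographic parity. Then for any $\beta_1,\ldots,\beta_k\in[0,1]$ with $\sum_{i=1}^k\beta_i=1$, the pair $\left(\sum_{i=1}^{k}\beta_i\epsilon_i,\ \sum_{i=1}^{k}\beta_i a_i\right)$ is also achievable with respect to demographic parity. Consequently, every point of the convex hull of $\{(\epsilon_1,a_1),\ldots,(\epsilon_k,a_k)\}$ is achievable with respect to demographic parity.
   Context: A (possibly randomized) binary classifier is a conditional distribution $\pi(\hat Y\mid X)$ on $\{0,1\}$ given the features $X$ (it does not take $Z$ as input); the prediction $\hat Y$ is drawn from $\pi(\cdot\mid X)$, so that $(X,Y,Z,\hat Y)$ has a joint distribution in which $\hat Y$ is conditionally independent of $(Y,Z)$ given $X$. Its accuracy is $\mathrm{Acc}(\pi)=\Pr(\hat Y=Y)$. Write $\pi(1\mid Z=i)=\Pr(\hat Y=1\mid Z=i)$. The demographic parity bias of $\pi$ is $\Delta_{DP}(\pi)=\sum_{i\neq j,\ i,j\in\mathcal{G}}|\pi(1\mid Z=i)-\pi(1\mid Z=j)|$. A pair $(\epsilon,a)$ of real numbers is achievable with respect to demographic parity if there exists a classifier $\pi$ with $\mathrm{Acc}(\pi)\ge a$ and $\Delta_{DP}(\pi)\le\epsilon$.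 *)

theory Defs
  imports "HOL-Probability.Probability"
begin

text \<open>A (possibly randomized) binary classifier is represented by its conditional
  distribution on {0,1} given the features, i.e. by the map
  x \<mapsto> pi(1 | X = x), a measurable function with values in [0,1].\<close>
definition classifier :: "'x measure \<Rightarrow> ('x \<Rightarrow> real) \<Rightarrow> bool" where
  "classifier SX p \<longleftrightarrow> p \<in> borel_measurable SX \<and> (\<forall>x\<in>space SX. 0 \<le> p x \<and> p x \<le> 1)"

text \<open>Accuracy Pr(Yhat = Y), where Yhat is drawn from p(.|X) independently of (Y,Z) given X.\<close>
definition acc :: "'w measure \<Rightarrow> ('w \<Rightarrow> 'x) \<Rightarrow> ('w \<Rightarrow> bool) \<Rightarrow> ('x \<Rightarrow> real) \<Rightarrow> real" where
  "acc M X Y p = (\<integral>\<omega>. (if Y \<omega> then p (X \<omega>) else 1 - p (X \<omega>)) \<partial>M)"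

text \<open>pi(1 | Z = i) = Pr(Yhat = 1, Z = i) / Pr(Z = i).\<close>
definition pos_rate :: "'w measure \<Rightarrow> ('w \<Rightarrow> 'x) \<Rightarrow> ('w \<Rightarrow> 'g) \<Rightarrow> ('x \<Rightarrow> real) \<Rightarrow> 'g \<Rightarrow> real" where
  "pos_rate M X Z p i =
     (\<integral>\<omega>. indicator {\<omega>\<in>space M. Z \<omega> = i} \<omega> * p (X \<omega>) \<partial>M) / measure M {\<omega>\<in>space M. Z \<omega> = i}"

definition dp_bias :: "'w measure \<Rightarrow> ('w \<Rightarrow> 'x) \<Rightarrow> ('w \<Rightarrow> 'g) \<Rightarrow> 'g set \<Rightarrow> ('x \<Rightarrow> real) \<Rightarrow> real" where
  "dp_bias M X Z G p = (\<Sum>i\<in>G. \<Sum>j\<in>G - {i}. \<bar>pos_rate M X Z p i - pos_rate M X Z p j\<bar>)"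

definition achievable_DP ::
  "'w measure \<Rightarrow> 'x measure \<Rightarrow> ('w \<Rightarrow> 'x) \<Rightarrow> ('w \<Rightarrow> bool) \<Rightarrow> ('w \<Rightarrow> 'g) \<Rightarrow> 'g set \<Rightarrow> real \<Rightarrow> real \<Rightarrow> bool" where
  "achievable_DP M SX X Y Z G \<epsilon> a \<longleftrightarrow>
     (\<exists>p. classifier SX p \<and> acc M X Y p \<ge> a \<and> dp_bias M X Z G p \<le> \<epsilon>)"

end

theory Submission
  imports Defs
begin

text \<open>Randomising between classifiers \<open>p\<^sub>1\<close> and \<open>p\<^sub>2\<close> with weights \<open>u\<close> and \<open>v\<close> yields the
  classifier \<open>u p\<^sub>1 + v p\<^sub>2\<close>. Its accuracy is the same convex combination of the two
  accuracies, and its group-wise positive rates are the same combinations of theirs, so by the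
  triangle inequality its demographic parity bias is at most \<open>u\<close> times the first bias plus \<open>v\<close>
  times the second.\<close>

lemma classifier_convex_comb:
  assumes "classifier SX p\<^sub>1" "classifier SX p\<^sub>2" "0 \<le> u" "0 \<le> v" "u + v = 1"
  shows "classifier SX (\<lambda>x. u * p\<^sub>1 x + v * p\<^sub>2 x)"
  unfolding classifier_def
proof (intro conjI ballI)
  have "p\<^sub>1 \<in> borel_measurable SX" "p\<^sub>2 \<in> borel_measurable SX"
    using assms(1,2) unfolding classifier_def by auto
  then show "(\<lambda>x. u * p\<^sub>1 x + v * p\<^sub>2 x) \<in> borel_measurable SX"
    by measurable
next
  fix x assume x: "x \<in> space SX"
  then have "0 \<le> p\<^sub>1 x" "p\<^sub>1 x \<le> 1" "0 \<le> p\<^sub>2 x" "p\<^sub>2 x \<le> 1"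
    using assms(1,2) unfolding classifier_def by auto
  moreover have "u * p\<^sub>1 x + v * p\<^sub>2 x \<le> u * 1 + v * 1"
    using calculation assms(3,4) by (intro add_mono mult_left_mono) auto
  ultimately show "0 \<le> u * p\<^sub>1 x + v * p\<^sub>2 x" "u * p\<^sub>1 x + v * p\<^sub>2 x \<le> 1"
    using assms(3-5) by auto
qed

lemma classifier_comp_measurable:
  assumes "X \<in> M \<rightarrow>\<^sub>M SX" "classifier SX p"
  shows "(\<lambda>w. p (X w)) \<in> borel_measurable M"
  using measurable_compose[OF assms(1)] assms(2) unfolding classifier_def by blast

lemma classifier_comp_bounds:
  assumes "X \<in> M \<rightarrow>\<^sub>M SX" "classifier SX p" "w \<in> space M"
  shows "0 \<le> p (X w)" "p (X w) \<le> 1"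
  using assms measurable_space[OF assms(1,3)] unfolding classifier_def by auto

lemma (in finite_measure) integrable_acc_integrand:
  assumes "X \<in> M \<rightarrow>\<^sub>M SX" "Y \<in> M \<rightarrow>\<^sub>M count_space UNIV" "classifier SX p"
  shows "integrable M (\<lambda>w. if Y w then p (X w) else 1 - p (X w))"
proof (rule integrable_const_bound[where B = 1])
  show "AE w in M. norm (if Y w then p (X w) else 1 - p (X w)) \<le> 1"
    using classifier_comp_bounds[OF assms(1,3)] by auto
  have "Measurable.pred M Y"
    using assms(2) by (simp add: pred_def measurable_count_space_eq2 sets_Collect_single)
  then show "(\<lambda>w. if Y w then p (X w) else 1 - p (X w)) \<in> borel_measurable M"
    using classifier_comp_measurable[OF assms(1,3)] by measurable
qed

lemma (in finite_measure) acc_convex_comb: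
  assumes "X \<in> M \<rightarrow>\<^sub>M SX" "Y \<in> M \<rightarrow>\<^sub>M count_space UNIV"
    and "classifier SX p\<^sub>1" "classifier SX p\<^sub>2" "u + v = 1"
  shows "acc M X Y (\<lambda>x. u * p\<^sub>1 x + v * p\<^sub>2 x) = u * acc M X Y p\<^sub>1 + v * acc M X Y p\<^sub>2"
proof -
  have "acc M X Y (\<lambda>x. u * p\<^sub>1 x + v * p\<^sub>2 x)
      = (\<integral>w. u * (if Y w then p\<^sub>1 (X w) else 1 - p\<^sub>1 (X w))
            + v * (if Y w then p\<^sub>2 (X w) else 1 - p\<^sub>2 (X w)) \<partial>M)"
    unfolding acc_def using assms(5) by (intro Bochner_Integration.integral_cong) (auto simp: algebra_simps)
  also have "\<dots> = u * acc M X Y p\<^sub>1 + v * acc M X Y p\<^sub>2"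
    using integrable_acc_integrand[OF assms(1,2)] assms(3,4) by (simp add: acc_def)
  finally show ?thesis .
qed

lemma (in finite_measure) pos_rate_linear:
  assumes "X \<in> M \<rightarrow>\<^sub>M SX" "Z \<in> M \<rightarrow>\<^sub>M count_space G" "i \<in> G"
    and "classifier SX p\<^sub>1" "classifier SX p\<^sub>2"
  shows "pos_rate M X Z (\<lambda>x. u * p\<^sub>1 x + v * p\<^sub>2 x) i
      = u * pos_rate M X Z p\<^sub>1 i + v * pos_rate M X Z p\<^sub>2 i"
proof -
  define S where "S = {w \<in> space M. Z w = i}"
  have "S = Z -` {i} \<inter> space M"
    unfolding S_def by auto
  then have S: "S \<in> sets M"
    using measurable_sets[OF assms(2)] assms(3) by auto
  have integrable: "integrable M (\<lambda>w. indicator S w * p (X w))" if "classifier SX p" for p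
  proof (rule integrable_const_bound[where B = 1])
    show "AE w in M. norm (indicator S w * p (X w)) \<le> (1::real)"
      using classifier_comp_bounds[OF assms(1) that] by (auto simp: indicator_def)
    show "(\<lambda>w. indicator S w * p (X w)) \<in> borel_measurable M"
      using classifier_comp_measurable[OF assms(1) that] S by measurable
  qed
  have "(\<integral>w. indicator S w * (u * p\<^sub>1 (X w) + v * p\<^sub>2 (X w)) \<partial>M)
      = (\<integral>w. u * (indicator S w * p\<^sub>1 (X w)) + v * (indicator S w * p\<^sub>2 (X w)) \<partial>M)"
    by (simp add: algebra_simps)
  also have "\<dots> = u * (\<integral>w. indicator S w * p\<^sub>1 (X w) \<partial>M) + v * (\<integral>w. indicator S w * p\<^sub>2 (X w) \<partial>M)"
    using integrable assms(4,5) by simp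
  finally show ?thesis
    unfolding pos_rate_def S_def[symmetric] by (simp add: add_divide_distrib)
qed

lemma (in finite_measure) dp_bias_convex_comb:
  assumes "X \<in> M \<rightarrow>\<^sub>M SX" "Z \<in> M \<rightarrow>\<^sub>M count_space G"
    and "classifier SX p\<^sub>1" "classifier SX p\<^sub>2" "0 \<le> u" "0 \<le> v"
  shows "dp_bias M X Z G (\<lambda>x. u * p\<^sub>1 x + v * p\<^sub>2 x)
      \<le> u * dp_bias M X Z G p\<^sub>1 + v * dp_bias M X Z G p\<^sub>2"
  unfolding dp_bias_def sum_distrib_left sum.distrib[symmetric]
proof (intro sum_mono)
  fix i j assume "i \<in> G" "j \<in> G - {i}"
  define r where "r p g = pos_rate M X Z p g" for p g
  have "\<bar>r (\<lambda>x. u * p\<^sub>1 x + v * p\<^sub>2 x) i - r (\<lambda>x. u * p\<^sub>1 x + v * p\<^sub>2 x) j\<bar>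
      = \<bar>u * (r p\<^sub>1 i - r p\<^sub>1 j) + v * (r p\<^sub>2 i - r p\<^sub>2 j)\<bar>"
    using pos_rate_linear[OF assms(1,2) _ assms(3,4)] \<open>i \<in> G\<close> \<open>j \<in> G - {i}\<close>
    by (simp add: r_def algebra_simps)
  also have "\<dots> \<le> u * \<bar>r p\<^sub>1 i - r p\<^sub>1 j\<bar> + v * \<bar>r p\<^sub>2 i - r p\<^sub>2 j\<bar>"
    using abs_triangle_ineq assms(5,6) by (metis abs_mult abs_of_nonneg)
  finally show "\<bar>r (\<lambda>x. u * p\<^sub>1 x + v * p\<^sub>2 x) i - r (\<lambda>x. u * p\<^sub>1 x + v * p\<^sub>2 x) j\<bar>
      \<le> u * \<bar>r p\<^sub>1 i - r p\<^sub>1 j\<bar> + v * \<bar>r p\<^sub>2 i - r p\<^sub>2 j\<bar>" .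
qed

lemma (in finite_measure) convex_achievable_DP:
  assumes "X \<in> M \<rightarrow>\<^sub>M SX" "Y \<in> M \<rightarrow>\<^sub>M count_space UNIV" "Z \<in> M \<rightarrow>\<^sub>M count_space G"
  shows "convex {(e, a). achievable_DP M SX X Y Z G e a}"
proof (rule convexI, clarsimp)
  fix e\<^sub>1 a\<^sub>1 e\<^sub>2 a\<^sub>2 u v :: real
  assume "achievable_DP M SX X Y Z G e\<^sub>1 a\<^sub>1" "achievable_DP M SX X Y Z G e\<^sub>2 a\<^sub>2"
    and uv: "0 \<le> u" "0 \<le> v" "u + v = 1"
  then obtain p\<^sub>1 p\<^sub>2 where p: "classifier SX p\<^sub>1" "classifier SX p\<^sub>2"
    and "acc M X Y p\<^sub>1 \<ge> a\<^sub>1" "acc M X Y p\<^sub>2 \<ge> a\<^sub>2"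
    and "dp_bias M X Z G p\<^sub>1 \<le> e\<^sub>1" "dp_bias M X Z G p\<^sub>2 \<le> e\<^sub>2"
    unfolding achievable_DP_def by blast
  have "u * a\<^sub>1 + v * a\<^sub>2 \<le> acc M X Y (\<lambda>x. u * p\<^sub>1 x + v * p\<^sub>2 x)"
    unfolding acc_convex_comb[OF assms(1,2) p uv(3)]
    using \<open>acc M X Y p\<^sub>1 \<ge> a\<^sub>1\<close> \<open>acc M X Y p\<^sub>2 \<ge> a\<^sub>2\<close> uv by (intro add_mono mult_left_mono)
  moreover have "dp_bias M X Z G (\<lambda>x. u * p\<^sub>1 x + v * p\<^sub>2 x) \<le> u * e\<^sub>1 + v * e\<^sub>2"
    using \<open>dp_bias M X Z G p\<^sub>1 \<le> e\<^sub>1\<close> \<open>dp_bias M X Z G p\<^sub>2 \<le> e\<^sub>2\<close> uv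
    by (intro order_trans[OF dp_bias_convex_comb[OF assms(1,3) p uv(1,2)]] add_mono mult_left_mono)
  ultimately show "achievable_DP M SX X Y Z G (u * e\<^sub>1 + v * e\<^sub>2) (u * a\<^sub>1 + v * a\<^sub>2)"
    using classifier_convex_comb[OF p uv] unfolding achievable_DP_def by blast
qed

theorem proposition1:
  fixes M :: "'w measure" and SX :: "'x measure"
    and X :: "'w \<Rightarrow> 'x" and Y :: "'w \<Rightarrow> bool" and Z :: "'w \<Rightarrow> 'g" and G :: "'g set"
    and k :: nat and eps a \<beta> :: "nat \<Rightarrow> real"
  assumes "prob_space M"
    and "X \<in> M \<rightarrow>\<^sub>M SX"
    and "Y \<in> M \<rightarrow>\<^sub>M count_space UNIV"
    and "Z \<in> M \<rightarrow>\<^sub>M count_space G"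
    and "finite G" and "card G \<ge> 2"
    and ach: "\<forall>i<k. achievable_DP M SX X Y Z G (eps i) (a i)"
  shows "((\<forall>i<k. 0 \<le> \<beta> i \<and> \<beta> i \<le> 1) \<and> (\<Sum>i<k. \<beta> i) = 1 \<longrightarrow>
            achievable_DP M SX X Y Z G (\<Sum>i<k. \<beta> i * eps i) (\<Sum>i<k. \<beta> i * a i))
       \<and> (\<forall>q \<in> convex hull {(eps i, a i) | i. i < k}. achievable_DP M SX X Y Z G (fst q) (snd q))"
proof -
  define C where "C = {(e, a). achievable_DP M SX X Y Z G e a}"
  have "finite_measure M"
    using \<open>prob_space M\<close> by (rule prob_space.finite_measure)
  then have convex: "convex C"
    unfolding C_def using assms(2-4) by (rule finite_measure.convex_achievable_DP)
  have points: "{(eps i, a i) | i. i < k} \<subseteq> C"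
    using ach unfolding C_def by auto
  show ?thesis
  proof (intro conjI impI ballI)
    assume "(\<forall>i<k. 0 \<le> \<beta> i \<and> \<beta> i \<le> 1) \<and> (\<Sum>i<k. \<beta> i) = 1"
    then have "(\<Sum>i<k. \<beta> i *\<^sub>R (eps i, a i)) \<in> C"
      using points by (intro convex_sum[OF _ convex]) auto
    moreover have "(\<Sum>i<k. \<beta> i *\<^sub>R (eps i, a i)) = (\<Sum>i<k. \<beta> i * eps i, \<Sum>i<k. \<beta> i * a i)"
      by (simp add: prod_eq_iff fst_sum snd_sum)
    ultimately show "achievable_DP M SX X Y Z G (\<Sum>i<k. \<beta> i * eps i) (\<Sum>i<k. \<beta> i * a i)"
      unfolding C_def by simp
  next
    fix q assume "q \<in> convex hull {(eps i, a i) | i. i < k}"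
    then have "q \<in> C"
      using hull_minimal[of _ C convex] points convex by blast
    then show "achievable_DP M SX X Y Z G (fst q) (snd q)"
      unfolding C_def by auto
  qed
qed

end
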